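(* Let $x=(x_1,\dots,x_n)\in B^n$ and suppose that its expansion under the multiplicative Selmer algorithm $S$ eventually becomes periodic, i.e. there are $m\geq 0$, $p\geq 1$ with $S^{m+p}x=S^mx$. Then \begin{equation*} \lim_{s\to\infty}\left(\frac{B_1^{(s)}}{B_0^{(s)}},\dots,\frac{B_n^{(s)}}{B_0^{(s)}}\right)=x. \end{equation*} Thus the periodic multiplicative algorithm of Selmer is weakly convergent and even uniformly weakly convergent, i.e. for every column index $g$, $0\leq g\leq n$, the ratios $\left(\frac{B^{(s)}_{1g}}{B^{(s)}_{0g}},\dots,\frac{B^{(s)}_{ng}}{B^{(s)}_{0g}}\right)$ of the entries of $\beta^{(s)}$ converge to $x$ as $s\to\infty$.
   Context: Let $B^n:=\{(x_1,\dots,x_n):\,1\geq x_1\geq\dots\geq x_n\geq 0\}$. The multiplicative Selmer algorithm (MSA) is the map $S\colon B^n\to B^n$, \begin{equation*} S(x_1,\dots,x_n)=\left(\frac{x_2}{x_1},\dots,\frac{x_n}{x_1},\frac{1-kx_n}{x_1}\right),\qquad k=k(x):=\left[x_n^{-1}\right], \end{equation*} with digit set $\mathbb{N}$ and cells $B(k)=\{x\in B^n:\frac{1}{k+1}<x_n\leq\frac1k\}$. The digits of $x$ are $k_i=k(S^{i-1}x)$, $i\geq 1$. To the digit $k$ one associates the $(n+1)\times(n+1)$-matrix $\beta(k)$ whose first row is $(0,\dots,0,k,1)$ (entry $k$ in the second-to-last column, entry $1$ in the last column), whose entries directly below the main diagonal are $1$, and whose other entries are $0$; it satisfies $\det\beta(k)=\pm1$.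 For $s\geq 1$ put $\beta^{(s)}(k_1,\dots,k_s):=\beta(k_1)\cdots\beta(k_s)=((B^{(s)}_{ij}))_{0\leq i,j\leq n}$, with $\beta^{(0)}$ the identity matrix. Its columns are written as \begin{equation*} \beta^{(s)}=\begin{pmatrix} B_0^{(s-n+1)} & \dots & B_0^{(s-1)} & B_0^{(s)} & B_0^{(s-n)} \\ \vdots & & & & \vdots\\ B_n^{(s-n+1)} & \dots & B_n^{(s-1)} & B_n^{(s)} & B_n^{(s-n)} \end{pmatrix}, \end{equation*} so $B_i^{(s)}$ is the entry in row $i$ and second-to-last column of $\beta^{(s)}$, and $B_i^{(s+1)}=k_{s+1}B_i^{(s-n+1)}+B_i^{(s-n)}$ for $i=0,\dots,n$. If $y=S^sx$ then $x_i=\frac{B_i^{(s-n+1)}+y_1B_i^{(s-n+2)}+\dots+y_{n-1}B_i^{(s)}+y_nB_i^{(s-n)}}{B_0^{(s-n+1)}+y_1B_0^{(s-n+2)}+\dots+y_{n-1}B_0^{(s)}+y_nB_0^{(s-n)}}$, $1\leq i\leq n$. *)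

theory Defs
  imports Complex_Main "Jordan_Normal_Form.Matrix"
begin

text \<open>Points of B^n are represented as functions x :: nat => real, where only the
coordinates x 1, ..., x n matter.\<close>

definition inB :: "nat \<Rightarrow> (nat \<Rightarrow> real) \<Rightarrow> bool" where
  "inB n x \<longleftrightarrow> x 1 \<le> 1 \<and> (\<forall>i\<in>{1..<n}. x (Suc i) \<le> x i) \<and> 0 \<le> x n"

definition selmer_digit :: "nat \<Rightarrow> (nat \<Rightarrow> real) \<Rightarrow> nat" where
  "selmer_digit n x = nat \<lfloor>1 / x n\<rfloor>"

definition selmer :: "nat \<Rightarrow> (nat \<Rightarrow> real) \<Rightarrow> (nat \<Rightarrow> real)" where
  "selmer n x = (\<lambda>i. if 1 \<le> i \<and> i < n then x (Suc i) / x 1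
                      else if i = n then (1 - real (selmer_digit n x) * x n) / x 1
                      else 0)"

definition beta :: "nat \<Rightarrow> nat \<Rightarrow> real mat" where
  "beta n k = mat (Suc n) (Suc n) (\<lambda>(i, j).
      if i = 0 then (if j = n - 1 then real k else 0) + (if j = n then 1 else 0)
      else if j + 1 = i then 1 else 0)"

fun betas :: "nat \<Rightarrow> (nat \<Rightarrow> real) \<Rightarrow> nat \<Rightarrow> real mat" where
  "betas n x 0 = 1\<^sub>m (Suc n)"
| "betas n x (Suc s) = betas n x s * beta n (selmer_digit n ((selmer n ^^ s) x))"

end

theory Submission
  imports Defs
begin

text \<open>Let \<open>z = (1, x\<^sub>1, \<dots>, x\<^sub>n)\<close>. One step of the algorithm gives \<open>z = x\<^sub>1 \<beta>(k\<^sub>1) (1, S x)\<close>, so \<open>z\<close> is a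
  positive multiple of \<open>\<beta>\<^sup>(\<^sup>s\<^sup>)\<close> applied to the homogeneous coordinates of \<open>S\<^sup>s x\<close>. After the preperiod
  the orbit is periodic, and since all digits are at least 1, a block of \<open>L = p (n\<^sup>2 + 2n + 1)\<close> steps
  yields a strictly positive matrix \<open>P\<close> having the homogeneous coordinates \<open>w\<close> of the periodic
  point as eigenvector. Such a matrix contracts the relative oscillation of any nonnegative vector
  about \<open>w\<close> by the factor \<open>1 - c/\<lambda> < 1\<close> (\<open>c\<close> the least entry of \<open>P\<close>, \<open>\<lambda>\<close> its eigenvalue). Hence every
  column of \<open>\<beta>\<^sup>(\<^sup>s\<^sup>)\<close> is, up to a geometrically small error, proportional to \<open>\<beta>\<^sup>(\<^sup>m\<^sup>+\<^sup>1\<^sup>) w\<close>, that is, to \<open>z\<close>.\<close>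

lemma beta_carrier [simp]: "beta n k \<in> carrier_mat (Suc n) (Suc n)"
  unfolding beta_def by simp

lemma betas_carrier [simp]: "betas n z s \<in> carrier_mat (Suc n) (Suc n)"
  by (induction s) auto

lemma beta_entry:
  "i \<le> n \<Longrightarrow> j \<le> n \<Longrightarrow> beta n k $$ (i, j) =
     (if i = 0 then (if j = n - 1 then real k else 0) + (if j = n then 1 else 0)
      else if j + 1 = i then 1 else 0)"
  unfolding beta_def by simp

lemma mult_mat_entry_atMost:
  assumes "A \<in> carrier_mat (Suc n) (Suc n)" "B \<in> carrier_mat (Suc n) (Suc n)" "i \<le> n" "j \<le> n"
  shows "(A * B) $$ (i, j) = (\<Sum>l\<le>n. A $$ (i, l) * B $$ (l, j))"
  using assms by (auto simp: scalar_prod_def lessThan_Suc_atMost atLeast0LessThan intro!: sum.cong)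

lemma betas_add: "betas n z (a + b) = betas n z a * betas n ((selmer n ^^ a) z) b"
proof (induction b)
  case (Suc b)
  have "(selmer n ^^ (a + b)) z = (selmer n ^^ b) ((selmer n ^^ a) z)"
    by (metis add.commute funpow_add comp_apply)
  then show ?case
    using Suc assoc_mult_mat[OF betas_carrier betas_carrier beta_carrier, of n z a] by simp
qed (simp add: right_mult_one_mat[OF betas_carrier])

lemma betas_Suc_entry:
  "i \<le> n \<Longrightarrow> j \<le> n \<Longrightarrow> betas n z (Suc s) $$ (i, j) =
     (\<Sum>l\<le>n. betas n z s $$ (i, l) * beta n (selmer_digit n ((selmer n ^^ s) z)) $$ (l, j))"
  by (simp add: mult_mat_entry_atMost)

lemma inB_antimono:
  assumes "inB n z" "1 \<le> i" "i \<le> j" "j \<le> n"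
  shows "z j \<le> z i"
  using assms(3)
proof (induction j rule: dec_induct)
  case (step k)
  then have "z (Suc k) \<le> z k"
    using assms(1,2,4) unfolding inB_def by auto
  with step show ?case by simp
qed simp

lemma inB_bounds:
  assumes "inB n z" "1 \<le> i" "i \<le> n"
  shows "z n \<le> z i" "z i \<le> 1"
proof -
  show "z n \<le> z i" using inB_antimono[OF assms(1,2,3) order_refl] .
  have "z i \<le> z 1" using inB_antimono[OF assms(1) order_refl assms(2,3)] .
  then show "z i \<le> 1" using assms(1) unfolding inB_def by simp
qed

lemma selmer_digit_bounds:
  assumes "0 < z n" "z n \<le> 1"
  shows "1 \<le> selmer_digit n z" "1 < (real (selmer_digit n z) + 1) * z n"
proof -
  have "1 \<le> 1 / z n" using assms by simp
  then have floor_ge: "1 \<le> \<lfloor>1 / z n\<rfloor>" by linarith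
  then show "1 \<le> selmer_digit n z" unfolding selmer_digit_def using nat_mono by fastforce
  have "real (selmer_digit n z) = \<lfloor>1 / z n\<rfloor>"
    unfolding selmer_digit_def by (rule of_nat_nat) (use floor_ge in linarith)
  then have "1 / z n < real (selmer_digit n z) + 1" by linarith
  then show "1 < (real (selmer_digit n z) + 1) * z n"
    using assms(1) by (simp add: field_simps)
qed

lemma selmer_inB:
  assumes "1 \<le> n" "inB n z" "0 < z n" "0 < selmer n z n"
  shows "inB n (selmer n z)"
proof -
  have z1: "0 < z 1" using inB_bounds[OF assms(2), of 1] assms(1,3) by linarith
  let ?k = "real (selmer_digit n z)"
  have digit: "1 < (?k + 1) * z n"
    using selmer_digit_bounds(2)[of z n] assms(3) inB_bounds[OF assms(2), of n] assms(1) by simp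
  have dec: "z (Suc i) \<le> z i" if "1 \<le> i" "i < n" for i
    using assms(2) that unfolding inB_def by auto
  have first: "selmer n z 1 \<le> 1"
  proof (cases "n = 1")
    case True
    then show ?thesis using digit z1 unfolding selmer_def by (simp add: field_simps)
  next
    case False
    then show ?thesis using dec[of 1] assms(1) z1 unfolding selmer_def by (simp add: field_simps)
  qed
  have "selmer n z (Suc i) \<le> selmer n z i" if i: "1 \<le> i" "i < n" for i
  proof (cases "Suc i = n")
    case True
    have "1 - ?k * z n \<le> z n" using digit by (simp add: algebra_simps)
    then show ?thesis using True i z1 unfolding selmer_def by (simp add: divide_right_mono)
  next
    case False
    then show ?thesis using dec[of "Suc i"] i z1 unfolding selmer_def by (simp add: divide_right_mono)
  qed
  then show ?thesis unfolding inB_def using first assms(4) by auto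
qed

lemma orbit_inB:
  assumes "1 \<le> n" "inB n x" "\<forall>j. 0 < (selmer n ^^ j) x n"
  shows "inB n ((selmer n ^^ s) x)"
proof (induction s)
  case (Suc s)
  have "0 < (selmer n ^^ s) x n" "0 < selmer n ((selmer n ^^ s) x) n"
    using assms(3) spec[OF assms(3), of "Suc s"] by auto
  then show ?case using selmer_inB[OF assms(1) Suc] by simp
qed (use assms in simp)

lemma orbit_digit_ge_1:
  assumes "1 \<le> n" "inB n x" "\<forall>j. 0 < (selmer n ^^ j) x n"
  shows "1 \<le> selmer_digit n ((selmer n ^^ s) x)"
  using selmer_digit_bounds(1) assms(3) inB_bounds(2)[OF orbit_inB[OF assms], of n s] assms(1)
  by simp

lemma selmer_cong:
  assumes "1 \<le> n" "\<forall>i\<in>{1..n}. z i = z' i"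
  shows "selmer n z = selmer n z'"
  using assms unfolding selmer_def selmer_digit_def by (auto intro!: ext)

text \<open>\<open>S\<^sup>m x\<close> is periodic only in the coordinates \<open>1..n\<close>, but \<open>S\<close> reads no other coordinate and
  sets them all to \<open>0\<close>, so \<open>S\<^sup>m\<^sup>+\<^sup>1 x\<close> is a genuine fixed point of \<open>S\<^sup>p\<close>.\<close>
lemma selmer_periodic_point:
  assumes "1 \<le> n" "\<forall>i\<in>{1..n}. (selmer n ^^ (m + p)) x i = (selmer n ^^ m) x i"
  shows "(selmer n ^^ p) ((selmer n ^^ Suc m) x) = (selmer n ^^ Suc m) x"
proof -
  have "(selmer n ^^ p) ((selmer n ^^ Suc m) x) = selmer n ((selmer n ^^ (m + p)) x)"
    by (metis add.commute add_Suc_right funpow.simps(2) funpow_add comp_apply)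
  also have "\<dots> = selmer n ((selmer n ^^ m) x)" using selmer_cong[OF assms] .
  finally show ?thesis by simp
qed

definition hom_coords :: "(nat \<Rightarrow> real) \<Rightarrow> nat \<Rightarrow> real" where
  "hom_coords z j = (if j = 0 then 1 else z j)"

lemma beta_row_sum:
  assumes "1 \<le> n" "i \<le> n"
  shows "(\<Sum>j\<le>n. beta n k $$ (i, j) * w j) = (if i = 0 then real k * w (n - 1) + w n else w (i - 1))"
proof (cases "i = 0")
  case True
  have "(\<Sum>j\<le>n. beta n k $$ (i, j) * w j)
        = (\<Sum>j\<le>n. (if j = n - 1 then real k * w j else 0) + (if j = n then w j else 0))"
    using True by (intro sum.cong) (auto simp: beta_entry algebra_simps)
  also have "\<dots> = real k * w (n - 1) + w n"
    using assms(1) by (simp add: sum.distrib)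
  finally show ?thesis using True by simp
next
  case False
  have "(\<Sum>j\<le>n. beta n k $$ (i, j) * w j) = (\<Sum>j\<le>n. if j = i - 1 then w j else 0)"
    using False assms by (intro sum.cong) (auto simp: beta_entry)
  also have "\<dots> = w (i - 1)" using assms by simp
  finally show ?thesis using False by simp
qed

lemma hom_coords_selmer:
  assumes "1 \<le> n" "inB n z" "0 < z n" "i \<le> n"
  shows "hom_coords z i = z 1 * (\<Sum>j\<le>n. beta n (selmer_digit n z) $$ (i, j) * hom_coords (selmer n z) j)"
proof (cases "i = 0")
  case True
  have "z 1 * (real (selmer_digit n z) * hom_coords (selmer n z) (n - 1) + hom_coords (selmer n z) n) = 1"
    using assms(1) inB_bounds[OF assms(2), of 1] assms(3)
    unfolding hom_coords_def selmer_def by (auto simp: field_simps)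
  then show ?thesis using True beta_row_sum[OF assms(1,4)] by (simp add: hom_coords_def)
next
  case False
  have "0 < z 1" using inB_bounds[OF assms(2), of 1] assms(1,3) by linarith
  then have "z 1 * hom_coords (selmer n z) (i - 1) = z i"
    using False assms(4) unfolding hom_coords_def selmer_def by (cases "i = 1") auto
  then show ?thesis using False beta_row_sum[OF assms(1,4)] by (simp add: hom_coords_def)
qed

text \<open>The paper's expansion of \<open>x\<close> in terms of \<open>S\<^sup>s x\<close>: the columns \<open>0..n\<close> of \<open>betas n x s\<close> are
  the paper's \<open>B^(s-n+1), ..., B^(s), B^(s-n)\<close>, in this order.\<close>
lemma hom_coords_betas:
  assumes "1 \<le> n" "inB n x" "\<forall>j. 0 < (selmer n ^^ j) x n"
  shows "\<exists>c>0. \<forall>i\<le>n. hom_coords x i =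
           c * (\<Sum>j\<le>n. betas n x s $$ (i, j) * hom_coords ((selmer n ^^ s) x) j)"
proof (induction s)
  case 0
  have "(\<Sum>j\<le>n. betas n x 0 $$ (i, j) * hom_coords x j) = hom_coords x i" if "i \<le> n" for i
  proof -
    have "(\<Sum>j\<le>n. betas n x 0 $$ (i, j) * hom_coords x j) = (\<Sum>j\<le>n. if j = i then hom_coords x j else 0)"
      using that by (intro sum.cong) auto
    then show ?thesis using that by simp
  qed
  then show ?case by (intro exI[of _ 1]) simp
next
  case (Suc s)
  then obtain c where c: "c > 0"
    "\<forall>i\<le>n. hom_coords x i = c * (\<Sum>j\<le>n. betas n x s $$ (i, j) * hom_coords ((selmer n ^^ s) x) j)"
    by blast
  define y where "y = (selmer n ^^ s) x"
  have y: "inB n y" "0 < y n" using orbit_inB[OF assms] assms(3) unfolding y_def by auto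
  have y1: "0 < y 1" using inB_bounds[OF y(1), of 1] assms(1) y(2) by linarith
  let ?b = "beta n (selmer_digit n y)" and ?w = "hom_coords (selmer n y)"
  have "hom_coords x i = (c * y 1) * (\<Sum>l\<le>n. betas n x (Suc s) $$ (i, l) * ?w l)"
    if i: "i \<le> n" for i
  proof -
    have "hom_coords x i = c * (\<Sum>j\<le>n. betas n x s $$ (i, j) * (y 1 * (\<Sum>l\<le>n. ?b $$ (j, l) * ?w l)))"
      using c(2) i hom_coords_selmer[OF assms(1) y] unfolding y_def by auto
    also have "\<dots> = (c * y 1) * (\<Sum>j\<le>n. \<Sum>l\<le>n. betas n x s $$ (i, j) * ?b $$ (j, l) * ?w l)"
      by (simp add: sum_distrib_left algebra_simps)
    also have "\<dots> = (c * y 1) * (\<Sum>l\<le>n. (\<Sum>j\<le>n. betas n x s $$ (i, j) * ?b $$ (j, l)) * ?w l)"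
      by (subst sum.swap) (simp add: sum_distrib_right)
    also have "\<dots> = (c * y 1) * (\<Sum>l\<le>n. betas n x (Suc s) $$ (i, l) * ?w l)"
      using betas_Suc_entry[OF i] unfolding y_def by simp
    finally show ?thesis .
  qed
  then show ?case using mult_pos_pos[OF c(1) y1] unfolding y_def by auto
qed

lemma beta_nonneg: "i \<le> n \<Longrightarrow> j \<le> n \<Longrightarrow> 0 \<le> beta n k $$ (i, j)"
  by (simp add: beta_entry)

lemma betas_nonneg: "i \<le> n \<Longrightarrow> j \<le> n \<Longrightarrow> 0 \<le> betas n z s $$ (i, j)"
proof (induction s arbitrary: i j)
  case (Suc s)
  then show ?case unfolding betas_Suc_entry[OF Suc(2,3)]
    by (intro sum_nonneg mult_nonneg_nonneg) (auto simp: beta_nonneg)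
qed simp

lemma betas_column_nonzero: "j \<le> n \<Longrightarrow> \<exists>i\<le>n. 0 < betas n z s $$ (i, j)"
proof (induction s arbitrary: j)
  case 0
  then show ?case by (intro exI[of _ j]) simp
next
  case (Suc s)
  let ?k = "selmer_digit n ((selmer n ^^ s) z)"
  obtain l where l: "l \<le> n" "0 < beta n ?k $$ (l, j)"
  proof (cases "j < n")
    case True
    then show ?thesis using that[of "Suc j"] by (simp add: beta_entry)
  next
    case False
    then show ?thesis using that[of 0] Suc(2) by (simp add: beta_entry)
  qed
  obtain i where i: "i \<le> n" "0 < betas n z s $$ (i, l)" using Suc.IH[OF l(1)] by blast
  have "0 < betas n z (Suc s) $$ (i, j)" unfolding betas_Suc_entry[OF i(1) Suc(2)]
    by (rule sum_pos2[of _ l])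
       (use l i Suc(2) in \<open>auto intro!: mult_nonneg_nonneg betas_nonneg beta_nonneg\<close>)
  then show ?case using i by blast
qed

text \<open>\<open>walk n L i j\<close>: a walk of length \<open>L\<close> from \<open>i\<close> to \<open>j\<close>, built up from its end, in the digraph
  on \<open>{0..n}\<close> with an edge \<open>l \<rightarrow> j\<close> exactly where \<open>beta n k $$ (l, j) > 0\<close> for every digit \<open>k \<ge> 1\<close>.\<close>
fun walk :: "nat \<Rightarrow> nat \<Rightarrow> nat \<Rightarrow> nat \<Rightarrow> bool" where
  "walk n 0 i j = (i = j)"
| "walk n (Suc L) i j = ((j < n \<and> walk n L i (Suc j)) \<or> ((j = n - 1 \<or> j = n) \<and> walk n L i 0))"

lemma walk_trans: "walk n a i l \<Longrightarrow> walk n b l j \<Longrightarrow> walk n (a + b) i j"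
  by (induction b arbitrary: j) auto

lemma walk_repeat:
  assumes "walk n l i i"
  shows "walk n (a * l) i i"
proof (induction a)
  case (Suc a)
  then show ?case using walk_trans[OF assms Suc] by simp
qed simp

lemma walk_down: "j + d \<le> n \<Longrightarrow> walk n d (j + d) j"
proof (induction d arbitrary: j)
  case (Suc d)
  have "walk n d (Suc (j + d)) (Suc j)" using Suc.IH[of "Suc j"] Suc.prems by simp
  then show ?case using Suc.prems by simp
qed simp

lemma walk_from_0:
  assumes "j \<le> n"
  shows "walk n (Suc (n - j)) 0 j"
proof -
  have "walk n 1 0 n" by simp
  moreover have "walk n (n - j) n j" using walk_down[of j "n - j" n] assms by simp
  ultimately have "walk n (1 + (n - j)) 0 j" by (rule walk_trans)
  then show ?thesis by simp
qed

lemma walk_0_0_large: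
  assumes "1 \<le> n" "n * n \<le> N"
  shows "walk n N 0 0"
proof -
  \<comment> \<open>the two cycles through \<open>0\<close> have the coprime lengths \<open>n\<close> and \<open>n + 1\<close>\<close>
  have "walk n 1 0 (n - 1)" by simp
  moreover have "walk n (n - 1) (n - 1) 0" using walk_down[of 0 "n - 1" n] by simp
  ultimately have short: "walk n n 0 0" using walk_trans[of n 1 0 "n - 1" "n - 1" 0] assms(1) by simp
  have long: "walk n (Suc n) 0 0" using walk_from_0[of 0 n] by simp
  define q where "q = N div n"
  define r where "r = N mod n"
  have r: "r < n" unfolding r_def using assms(1) by simp
  have N: "N = q * n + r" unfolding q_def r_def by simp
  then have "n * n < Suc q * n" using assms(2) r by simp
  then have "n \<le> q" by (metis mult_less_cancel2 less_Suc_eq_le)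
  then have "N = (q - r) * n + r * Suc n"
    using N r by (simp add: algebra_simps diff_mult_distrib)
  then show ?thesis
    using walk_trans[OF walk_repeat[OF short] walk_repeat[OF long]] by metis
qed

lemma walk_any:
  assumes "1 \<le> n" "i \<le> n" "j \<le> n" "n * n + 2 * n + 1 \<le> L"
  shows "walk n L i j"
proof -
  define N where "N = L - i - Suc (n - j)"
  have "walk n i i 0" using walk_down[of 0 i n] assms(2) by simp
  moreover have "walk n N 0 0" using walk_0_0_large[OF assms(1)] assms unfolding N_def by simp
  ultimately have "walk n (i + N) i 0" by (rule walk_trans)
  then have "walk n (i + N + Suc (n - j)) i j" using walk_trans walk_from_0[OF assms(3)] by blast
  moreover have "i + N + Suc (n - j) = L" unfolding N_def using assms by simp
  ultimately show ?thesis by (simp only:)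
qed

lemma betas_pos_of_walk:
  assumes "\<forall>s. 1 \<le> selmer_digit n ((selmer n ^^ s) z)"
  shows "walk n L i j \<Longrightarrow> i \<le> n \<Longrightarrow> j \<le> n \<Longrightarrow> 0 < betas n z L $$ (i, j)"
proof (induction L arbitrary: j)
  case (Suc L)
  let ?k = "selmer_digit n ((selmer n ^^ L) z)"
  obtain l where l: "l \<le> n" "0 < beta n ?k $$ (l, j)" "0 < betas n z L $$ (i, l)"
  proof (cases "j < n \<and> walk n L i (Suc j)")
    case True
    then show ?thesis using that[of "Suc j"] Suc by (simp add: beta_entry)
  next
    case False
    then have "(j = n - 1 \<or> j = n) \<and> walk n L i 0" using Suc(2) by auto
    moreover have "1 \<le> ?k" using assms by blast
    ultimately show ?thesis using that[of 0] Suc by (auto simp: beta_entry)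
  qed
  show ?case unfolding betas_Suc_entry[OF Suc(3,4)]
    by (rule sum_pos2[of _ l])
       (use l Suc(3,4) in \<open>auto intro!: mult_nonneg_nonneg betas_nonneg beta_nonneg\<close>)
qed simp

lemma betas_pos:
  assumes "1 \<le> n" "\<forall>s. 1 \<le> selmer_digit n ((selmer n ^^ s) z)"
    and "n * n + 2 * n + 1 \<le> L" "i \<le> n" "j \<le> n"
  shows "0 < betas n z L $$ (i, j)"
  using betas_pos_of_walk[OF assms(2) walk_any[OF assms(1,4,5,3)] assms(4,5)] .

definition matvec :: "'a set \<Rightarrow> ('a \<Rightarrow> 'a \<Rightarrow> real) \<Rightarrow> ('a \<Rightarrow> real) \<Rightarrow> 'a \<Rightarrow> real" where
  "matvec I P u = (\<lambda>i. \<Sum>j\<in>I. P i j * u j)"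

text \<open>The ratio \<open>(b - a) / a\<close> measures how far \<open>u\<close> is from being proportional to \<open>w\<close>.\<close>
definition bracketed :: "'a set \<Rightarrow> ('a \<Rightarrow> real) \<Rightarrow> ('a \<Rightarrow> real) \<Rightarrow> real \<Rightarrow> real \<Rightarrow> bool" where
  "bracketed I w u a b \<longleftrightarrow> 0 < a \<and> a \<le> b \<and> (\<forall>j\<in>I. a * w j \<le> u j \<and> u j \<le> b * w j)"

lemma matvec_cong: "(\<And>j. j \<in> I \<Longrightarrow> u j = u' j) \<Longrightarrow> matvec I P u i = matvec I P u' i"
  unfolding matvec_def by (intro sum.cong) simp_all

lemma eigenvalue_ge_min_entry:
  assumes "finite I" "i \<in> I" "\<forall>j\<in>I. 0 < w j" "0 < c" "\<forall>i\<in>I. \<forall>j\<in>I. c \<le> P i j"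
    and "matvec I P w i = lam * w i"
  shows "c \<le> lam"
proof -
  have nonneg: "0 \<le> P i j * w j" if "j \<in> I" for j
    using assms(2-5) that by (meson less_imp_le less_le_trans mult_nonneg_nonneg)
  have "c * w i \<le> P i i * w i" using assms(2-5) by (intro mult_right_mono) auto
  also have "\<dots> \<le> matvec I P w i"
    unfolding matvec_def using assms(1,2) nonneg by (intro member_le_sum) auto
  finally show ?thesis using assms(2,3,6) by simp
qed

lemma weighted_row_sum_ge:
  fixes w g :: "'a \<Rightarrow> real"
  assumes "finite I" "i \<in> I" "\<forall>j\<in>I. 0 < w j" "0 < c" "\<forall>j\<in>I. c \<le> P i j" "\<forall>j\<in>I. 0 \<le> g j"
  shows "c * (\<Sum>j\<in>I. g j) / (\<Sum>j\<in>I. w j) * w i \<le> (\<Sum>j\<in>I. P i j * g j)"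
proof -
  have wi: "w i \<le> (\<Sum>j\<in>I. w j)" by (rule member_le_sum) (use assms(1-3) in \<open>auto intro: less_imp_le\<close>)
  then have W: "0 < (\<Sum>j\<in>I. w j)" using assms(2,3) by (metis less_le_trans)
  have "c * (\<Sum>j\<in>I. g j) * w i \<le> c * (\<Sum>j\<in>I. g j) * (\<Sum>j\<in>I. w j)"
    using wi by (rule mult_left_mono) (use assms(4,6) in \<open>simp add: sum_nonneg\<close>)
  then have "c * (\<Sum>j\<in>I. g j) / (\<Sum>j\<in>I. w j) * w i \<le> c * (\<Sum>j\<in>I. g j)"
    using W by (simp add: field_simps)
  also have "\<dots> \<le> (\<Sum>j\<in>I. P i j * g j)"
    unfolding sum_distrib_left using assms(5,6) by (intro sum_mono mult_right_mono) auto
  finally show ?thesis .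
qed

text \<open>Each row of a matrix with entries \<open>\<ge> c\<close> picks up the total excess of \<open>u\<close> over \<open>a w\<close> (and below
  \<open>b w\<close>) with weight at least \<open>c\<close>, which tightens the bracket.\<close>
lemma matvec_bracket_bounds:
  assumes "finite I" "\<forall>j\<in>I. 0 < w j" "0 < c" "\<forall>i\<in>I. \<forall>j\<in>I. c \<le> P i j"
    and eig: "\<forall>i\<in>I. matvec I P w i = lam * w i"
    and u: "\<forall>j\<in>I. a * w j \<le> u j \<and> u j \<le> b * w j" and i: "i \<in> I"
  shows "(lam * a + c * (\<Sum>j\<in>I. u j - a * w j) / (\<Sum>j\<in>I. w j)) * w i \<le> matvec I P u i"
    and "matvec I P u i \<le> (lam * b - c * (\<Sum>j\<in>I. b * w j - u j) / (\<Sum>j\<in>I. w j)) * w i"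
proof -
  have excess: "c * (\<Sum>j\<in>I. g j) / (\<Sum>j\<in>I. w j) * w i \<le> (\<Sum>j\<in>I. P i j * g j)"
    if "\<forall>j\<in>I. 0 \<le> g j" for g
    by (rule weighted_row_sum_ge[OF assms(1) i assms(2,3) _ that]) (use assms(4) i in blast)
  have "matvec I P u i = a * matvec I P w i + (\<Sum>j\<in>I. P i j * (u j - a * w j))"
    unfolding matvec_def by (simp add: sum_distrib_left sum.distrib[symmetric] algebra_simps)
  then show "(lam * a + c * (\<Sum>j\<in>I. u j - a * w j) / (\<Sum>j\<in>I. w j)) * w i \<le> matvec I P u i"
    using excess[of "\<lambda>j. u j - a * w j"] eig i u by (simp add: algebra_simps)
  have "matvec I P u i = b * matvec I P w i - (\<Sum>j\<in>I. P i j * (b * w j - u j))"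
    unfolding matvec_def by (simp add: sum_distrib_left sum_subtractf[symmetric] algebra_simps)
  then show "matvec I P u i \<le> (lam * b - c * (\<Sum>j\<in>I. b * w j - u j) / (\<Sum>j\<in>I. w j)) * w i"
    using excess[of "\<lambda>j. b * w j - u j"] eig i u by (simp add: algebra_simps)
qed

lemma bracketed_matvec:
  assumes "finite I" "I \<noteq> {}" "\<forall>j\<in>I. 0 < w j" "0 < c" "\<forall>i\<in>I. \<forall>j\<in>I. c \<le> P i j"
    and eig: "\<forall>i\<in>I. matvec I P w i = lam * w i"
    and u: "bracketed I w u a b"
  shows "\<exists>a' b'. bracketed I w (matvec I P u) a' b' \<and> (b' - a') / a' \<le> (1 - c / lam) * ((b - a) / a)"
proof -
  obtain i0 where "i0 \<in> I" using assms(2) by blast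
  have cl: "c \<le> lam" using eigenvalue_ge_min_entry[OF assms(1) \<open>i0 \<in> I\<close> assms(3-5)] eig \<open>i0 \<in> I\<close> by blast
  have a: "0 < a" "a \<le> b" and ub: "\<forall>j\<in>I. a * w j \<le> u j \<and> u j \<le> b * w j"
    using u unfolding bracketed_def by auto
  define W where "W = (\<Sum>j\<in>I. w j)"
  define E where "E = (\<Sum>j\<in>I. u j - a * w j)"
  define F where "F = (\<Sum>j\<in>I. b * w j - u j)"
  have W: "0 < W"
    unfolding W_def using assms(1,3) \<open>i0 \<in> I\<close> by (intro sum_pos2[of _ i0]) (auto intro: less_imp_le)
  have EF: "0 \<le> E" "0 \<le> F" unfolding E_def F_def using ub by (auto intro!: sum_nonneg)
  have "E + F = (b - a) * W" unfolding E_def F_def W_def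
    by (simp add: sum.distrib[symmetric] sum_distrib_left algebra_simps)
  then have "c * E / W + c * F / W = c * (b - a)"
    using W by (simp add: add_divide_distrib[symmetric] distrib_left[symmetric])
  then have diff: "(lam * b - c * F / W) - (lam * a + c * E / W) = (lam - c) * (b - a)"
    by (simp add: algebra_simps)
  have "0 < lam * a + c * E / W" using a cl assms(4) EF W by (auto intro!: add_pos_nonneg)
  moreover have "lam * a + c * E / W \<le> lam * b - c * F / W"
    using diff mult_nonneg_nonneg[of "lam - c" "b - a"] cl a by linarith
  ultimately have "bracketed I w (matvec I P u) (lam * a + c * E / W) (lam * b - c * F / W)"
    unfolding bracketed_def
    using matvec_bracket_bounds[OF assms(1,3-5) eig ub, folded W_def E_def F_def] by blast
  moreover have "((lam * b - c * F / W) - (lam * a + c * E / W)) / (lam * a + c * E / W)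
                   \<le> (1 - c / lam) * ((b - a) / a)"
  proof -
    have la: "0 < lam * a" using cl a(1) assms(4) by simp
    have "lam * a \<le> lam * a + c * E / W" using assms(4) EF W by simp
    then have "(lam - c) * (b - a) / (lam * a + c * E / W) \<le> (lam - c) * (b - a) / (lam * a)"
      using cl a la by (intro divide_left_mono) (auto intro!: mult_pos_pos)
    also have "\<dots> = (1 - c / lam) * ((b - a) / a)" using cl a assms(4) by (simp add: field_simps)
    finally show ?thesis unfolding diff .
  qed
  ultimately show ?thesis by blast
qed

lemma bracketed_matvec_power:
  assumes "finite I" "I \<noteq> {}" "\<forall>j\<in>I. 0 < w j" "0 < c" "\<forall>i\<in>I. \<forall>j\<in>I. c \<le> P i j"
    and "\<forall>i\<in>I. matvec I P w i = lam * w i"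
    and "bracketed I w u a b"
  shows "\<exists>a' b'. bracketed I w ((matvec I P ^^ t) u) a' b' \<and>
           (b' - a') / a' \<le> (1 - c / lam) ^ t * ((b - a) / a)"
proof (induction t)
  case 0
  then show ?case using assms(7) by auto
next
  case (Suc t)
  then obtain a1 b1 where t: "bracketed I w ((matvec I P ^^ t) u) a1 b1"
    "(b1 - a1) / a1 \<le> (1 - c / lam) ^ t * ((b - a) / a)" by blast
  obtain a2 b2 where Suc_t: "bracketed I w (matvec I P ((matvec I P ^^ t) u)) a2 b2"
    "(b2 - a2) / a2 \<le> (1 - c / lam) * ((b1 - a1) / a1)"
    using bracketed_matvec[OF assms(1-6) t(1)] by blast
  obtain i0 where "i0 \<in> I" using assms(2) by blast
  then have "0 \<le> 1 - c / lam"
    using eigenvalue_ge_min_entry[OF assms(1) _ assms(3-5)] assms(4,6) by force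
  from order_trans[OF Suc_t(2) mult_left_mono[OF t(2) this]]
  have "(b2 - a2) / a2 \<le> (1 - c / lam) ^ Suc t * ((b - a) / a)" by simp
  then show ?case using Suc_t(1) by auto
qed

lemma bracketed_matvec_nonneg:
  assumes "finite I" "\<forall>j\<in>I. wl \<le> w j \<and> w j \<le> 1" "0 < wl"
    and "0 < c" "\<forall>i\<in>I. \<forall>j\<in>I. c \<le> P i j \<and> P i j \<le> C"
    and "\<forall>j\<in>I. 0 \<le> v j" "0 < (\<Sum>j\<in>I. v j)"
  shows "\<exists>a b. bracketed I w (matvec I P v) a b \<and> (b - a) / a \<le> C / (c * wl)"
proof -
  define V where "V = (\<Sum>j\<in>I. v j)"
  have V: "0 < V" using assms(7) unfolding V_def .
  obtain j0 where "j0 \<in> I" using V unfolding V_def by (metis ex_in_conv sum.empty less_irrefl)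
  then have "c \<le> C" "wl \<le> 1" using assms(2,5) by (auto intro: order_trans)
  then have "c * wl \<le> C" using assms(4) by (meson less_imp_le mult_left_le order_trans)
  then have "c * wl * V \<le> C * V" using V by (intro mult_right_mono) auto
  then have C: "0 < C" "c * V \<le> C * V / wl"
    using \<open>c \<le> C\<close> assms(3,4) by (auto simp: field_simps)
  have lower: "c * V \<le> matvec I P v i" and upper: "matvec I P v i \<le> C * V" if "i \<in> I" for i
    unfolding matvec_def V_def sum_distrib_left using assms(5,6) that
    by (auto intro!: sum_mono mult_right_mono)
  have "bracketed I w (matvec I P v) (c * V) (C * V / wl)"
    unfolding bracketed_def
  proof (intro conjI ballI)
    fix j assume j: "j \<in> I"
    have "c * V * w j \<le> c * V" using assms(2,4) j V by (simp add: mult_left_le)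
    then show "c * V * w j \<le> matvec I P v j" using lower[OF j] by linarith
    have "C * V * wl \<le> C * V * w j" using assms(2) j C V by (intro mult_left_mono) auto
    then have "C * V \<le> C * V / wl * w j" using assms(3) by (simp add: field_simps)
    then show "matvec I P v j \<le> C * V / wl * w j" using upper[OF j] by linarith
  qed (use assms(4) V C in auto)
  moreover have "(C * V / wl - c * V) / (c * V) \<le> C / (c * wl)"
  proof -
    have "(C * V / wl - c * V) / (c * V) \<le> (C * V / wl) / (c * V)"
      using assms(3,4) V C by (intro divide_right_mono) auto
    also have "\<dots> = C / (c * wl)" using V by (simp add: field_simps)
    finally show ?thesis .
  qed
  ultimately show ?thesis by blast
qed

lemma ratio_close_of_bracketed:
  assumes "\<forall>i\<in>I. \<forall>j\<in>I. 0 \<le> A i j" "\<forall>i\<in>I. z i = mu * matvec I A w i" "0 < mu"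
    and "i0 \<in> I" "z i0 = 1" "bracketed I w u a b" "i \<in> I" "0 \<le> z i" "z i \<le> 1"
  shows "\<bar>matvec I A u i / matvec I A u i0 - z i\<bar> \<le> (b - a) / a"
proof -
  have a: "0 < a" "a \<le> b" and u: "\<And>j. j \<in> I \<Longrightarrow> a * w j \<le> u j \<and> u j \<le> b * w j"
    using assms(6) unfolding bracketed_def by auto
  have bounds: "a * z k / mu \<le> matvec I A u k \<and> matvec I A u k \<le> b * z k / mu" if k: "k \<in> I" for k
  proof -
    have z: "z k / mu = matvec I A w k" using assms(2,3) k by simp
    have "matvec I A (\<lambda>j. a * w j) k \<le> matvec I A u k" "matvec I A u k \<le> matvec I A (\<lambda>j. b * w j) k"
      unfolding matvec_def using assms(1) k u by (auto intro!: sum_mono mult_left_mono)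
    moreover have "matvec I A (\<lambda>j. d * w j) k = d * (z k / mu)" for d
      unfolding z matvec_def by (simp add: sum_distrib_left algebra_simps)
    ultimately show ?thesis by simp
  qed
  note bi = bounds[OF assms(7)] and b0 = bounds[OF assms(4)]
  have "0 < a * z i0 / mu" "0 \<le> a * z i / mu" using a assms(3,5,8) by simp_all
  then have pos0: "0 < matvec I A u i0" and posi: "0 \<le> matvec I A u i" using b0 bi by linarith+
  have "matvec I A u i / matvec I A u i0 \<le> (b * z i / mu) / (a * z i0 / mu)"
    by (rule frac_le) (use bi b0 a assms(3,5,8) posi in auto)
  also have "\<dots> = z i + z i * ((b - a) / a)" using assms(3,5) a by (simp add: field_simps)
  finally have upper: "matvec I A u i / matvec I A u i0 \<le> z i + z i * ((b - a) / a)" .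
  have "(a * z i / mu) / (b * z i0 / mu) \<le> matvec I A u i / matvec I A u i0"
    by (rule frac_le) (use bi b0 a assms(3,5,8) pos0 posi in auto)
  moreover have "(a * z i / mu) / (b * z i0 / mu) = z i - z i * ((b - a) / b)"
    using assms(3,5) a by (simp add: field_simps)
  ultimately have lower: "z i - z i * ((b - a) / b) \<le> matvec I A u i / matvec I A u i0" by simp
  have "(b - a) / b \<le> (b - a) / a" using a by (intro divide_left_mono) auto
  moreover have "z i * ((b - a) / b) \<le> (b - a) / b" "z i * ((b - a) / a) \<le> (b - a) / a"
    using mult_left_le_one_le[of "(b - a) / b" "z i"] mult_left_le_one_le[of "(b - a) / a" "z i"]
      a assms(8,9) by simp_all
  ultimately show ?thesis using upper lower unfolding abs_le_iff by linarith
qed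

lemma positive_matrix_ratio_bound:
  assumes I: "finite I" "i0 \<in> I" "i \<in> I"
    and w: "\<forall>j\<in>I. wl \<le> w j \<and> w j \<le> 1" "0 < wl"
    and P: "0 < c" "\<forall>i\<in>I. \<forall>j\<in>I. c \<le> P i j \<and> P i j \<le> C" "\<forall>i\<in>I. matvec I P w i = lam * w i"
    and A: "\<forall>i\<in>I. \<forall>j\<in>I. 0 \<le> A i j" "\<forall>i\<in>I. z i = mu * matvec I A w i" "0 < mu"
    and z: "z i0 = 1" "0 \<le> z i" "z i \<le> 1"
    and v: "\<forall>j\<in>I. 0 \<le> v j" "0 < (\<Sum>j\<in>I. v j)"
  shows "\<bar>matvec I A ((matvec I P ^^ Suc t) v) i / matvec I A ((matvec I P ^^ Suc t) v) i0 - z i\<bar>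
           \<le> (1 - c / lam) ^ t * (C / (c * wl))"
proof -
  have w_pos: "\<forall>j\<in>I. 0 < w j" using w by (auto intro: less_le_trans)
  have cP: "\<forall>i\<in>I. \<forall>j\<in>I. c \<le> P i j" using P(2) by blast
  have "I \<noteq> {}" using I(2) by blast
  have "c \<le> lam" using eigenvalue_ge_min_entry[OF I(1,2) w_pos P(1) cP] P(3) I(2) by blast
  then have "0 \<le> 1 - c / lam" using P(1) by simp
  obtain a b where ab: "bracketed I w (matvec I P v) a b" "(b - a) / a \<le> C / (c * wl)"
    using bracketed_matvec_nonneg[OF I(1) w P(1,2) v] by blast
  obtain a' b' where ab': "bracketed I w ((matvec I P ^^ t) (matvec I P v)) a' b'"
    "(b' - a') / a' \<le> (1 - c / lam) ^ t * ((b - a) / a)"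
    using bracketed_matvec_power[OF I(1) \<open>I \<noteq> {}\<close> w_pos P(1) cP P(3) ab(1)] by blast
  have "(matvec I P ^^ Suc t) v = (matvec I P ^^ t) (matvec I P v)"
    by (simp add: funpow_Suc_right del: funpow.simps)
  then have "\<bar>matvec I A ((matvec I P ^^ Suc t) v) i / matvec I A ((matvec I P ^^ Suc t) v) i0 - z i\<bar>
          \<le> (b' - a') / a'"
    using ratio_close_of_bracketed[OF A I(2) z(1) ab'(1) I(3) z(2,3)] by simp
  also have "\<dots> \<le> (1 - c / lam) ^ t * (C / (c * wl))"
    using ab'(2) mult_left_mono[OF ab(2) zero_le_power[OF \<open>0 \<le> 1 - c / lam\<close>, of t]] by linarith
  finally show ?thesis .
qed

lemma LIMSEQ_of_geometric_blocks:
  fixes f :: "nat \<Rightarrow> real"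
  assumes "0 \<le> q" "q < 1" "0 < L" "0 < K"
    and bound: "\<And>t r. \<bar>f (a + (Suc t * L + r)) - l\<bar> \<le> q ^ t * K"
  shows "f \<longlonglongrightarrow> l"
proof (rule LIMSEQ_I)
  fix e :: real assume "0 < e"
  have "(\<lambda>t. q ^ t * K) \<longlonglongrightarrow> 0 * K"
    by (intro tendsto_mult_right LIMSEQ_power_zero) (use assms in simp)
  then obtain T where "\<forall>t\<ge>T. norm (q ^ t * K - 0 * K) < e" using LIMSEQ_D \<open>0 < e\<close> by blast
  then have T: "q ^ T * K < e" by (simp add: abs_less_iff)
  show "\<exists>s0. \<forall>s\<ge>s0. norm (f s - l) < e"
  proof (intro exI allI impI)
    fix s assume s: "a + Suc T * L \<le> s"
    define t where "t = (s - a) div L - 1"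
    have "Suc T \<le> (s - a) div L"
      using div_le_mono[of "Suc T * L" "s - a" L] s assms(3) by simp
    then have "s = a + (Suc t * L + (s - a) mod L)" and "T \<le> t"
      using s unfolding t_def by (auto simp: div_mult_mod_eq)
    moreover have "q ^ t * K \<le> q ^ T * K"
      using \<open>T \<le> t\<close> assms by (intro mult_right_mono power_decreasing) auto
    ultimately show "norm (f s - l) < e" using bound[of t "(s - a) mod L"] T by simp
  qed
qed

lemma finite_positive_bounds:
  fixes f :: "'a \<Rightarrow> 'a \<Rightarrow> real"
  assumes "finite I" "\<forall>i\<in>I. \<forall>j\<in>I. 0 < f i j"
  shows "\<exists>c>0. \<exists>C. \<forall>i\<in>I. \<forall>j\<in>I. c \<le> f i j \<and> f i j \<le> C"
proof (cases "I = {}")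
  case False
  let ?F = "case_prod f ` (I \<times> I)"
  have "finite ?F" "?F \<noteq> {}" "\<forall>r\<in>?F. 0 < r" using assms False by auto
  then have "0 < Min ?F" by simp
  moreover have "\<forall>i\<in>I. \<forall>j\<in>I. Min ?F \<le> f i j \<and> f i j \<le> Max ?F"
    using \<open>finite ?F\<close> by (auto intro!: Min_le Max_ge)
  ultimately show ?thesis by blast
qed (intro exI[of _ "1 :: real"], simp)

lemma hom_coords_bounds:
  assumes "1 \<le> n" "inB n z" "j \<le> n"
  shows "z n \<le> hom_coords z j" "hom_coords z j \<le> 1"
  using inB_bounds[OF assms(2)] assms(1,3) unfolding hom_coords_def
  by (cases "j = 0"; force)+

lemma betas_add_entry:
  assumes "k \<le> n" "g \<le> n"
  shows "betas n z (a + s) $$ (k, g) =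
           matvec {..n} (\<lambda>i j. betas n z a $$ (i, j)) (\<lambda>l. betas n ((selmer n ^^ a) z) s $$ (l, g)) k"
  unfolding betas_add matvec_def using assms by (simp add: mult_mat_entry_atMost)

lemma betas_periodic_column:
  assumes "(selmer n ^^ L) y = y" "g \<le> n" "k \<le> n"
  shows "betas n y (t * L + r) $$ (k, g) =
           (matvec {..n} (\<lambda>i j. betas n y L $$ (i, j)) ^^ t) (\<lambda>l. betas n y r $$ (l, g)) k"
  using assms(3)
proof (induction t arbitrary: k)
  case (Suc t)
  let ?P = "\<lambda>i j. betas n y L $$ (i, j)"
  have "betas n y (Suc t * L + r) $$ (k, g) = betas n y (L + (t * L + r)) $$ (k, g)"
    by (simp add: add.assoc)
  also have "\<dots> = matvec {..n} ?P (\<lambda>l. betas n y (t * L + r) $$ (l, g)) k"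
    using betas_add_entry[OF Suc.prems assms(2)] assms(1) by simp
  also have "\<dots> = matvec {..n} ?P ((matvec {..n} ?P ^^ t) (\<lambda>l. betas n y r $$ (l, g))) k"
    using Suc.IH by (intro matvec_cong) simp
  finally show ?case by simp
qed simp

lemma periodic_block_eigen:
  assumes n: "1 \<le> n" and y: "inB n y" "\<forall>j. 0 < (selmer n ^^ j) y n"
    and period: "(selmer n ^^ L) y = y" and L: "n * n + 2 * n + 1 \<le> L"
  obtains c C lam where "0 < c" "c \<le> lam"
    "\<forall>i\<in>{..n}. \<forall>j\<in>{..n}. c \<le> betas n y L $$ (i, j) \<and> betas n y L $$ (i, j) \<le> C"
    "\<forall>i\<in>{..n}. matvec {..n} (\<lambda>i j. betas n y L $$ (i, j)) (hom_coords y) i = lam * hom_coords y i"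
proof -
  let ?P = "\<lambda>i j. betas n y L $$ (i, j)"
  have "\<forall>i\<in>{..n}. \<forall>j\<in>{..n}. 0 < ?P i j"
    using betas_pos[OF n allI[OF orbit_digit_ge_1[OF n y]] L] by simp
  from finite_positive_bounds[OF finite_atMost this]
  obtain c C where c: "0 < c" "\<forall>i\<in>{..n}. \<forall>j\<in>{..n}. c \<le> ?P i j \<and> ?P i j \<le> C" by blast
  obtain c1 where "0 < c1" "\<forall>i\<le>n. hom_coords y i = c1 * matvec {..n} ?P (hom_coords y) i"
    using hom_coords_betas[OF n y, of L] unfolding period matvec_def by blast
  then have eig: "\<forall>i\<in>{..n}. matvec {..n} ?P (hom_coords y) i = (1 / c1) * hom_coords y i" by simp
  have "\<forall>j\<in>{..n}. 0 < hom_coords y j"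
    using hom_coords_bounds(1)[OF n y(1)] y(2)[rule_format, of 0] by (auto intro: less_le_trans)
  moreover have "\<forall>i\<in>{..n}. \<forall>j\<in>{..n}. c \<le> ?P i j" using c(2) by blast
  ultimately have "c \<le> 1 / c1"
    by (rule eigenvalue_ge_min_entry[OF finite_atMost atMost_iff[THEN iffD2, OF le0] _ c(1)]) (use eig in simp)
  then show ?thesis by (rule that[OF c(1) _ c(2) eig])
qed

lemma selmer_periodic_tail:
  assumes n: "1 \<le> n" and x: "inB n x" "\<forall>j. 0 < (selmer n ^^ j) x n"
    and per: "\<forall>i\<in>{1..n}. (selmer n ^^ (m + p)) x i = (selmer n ^^ m) x i"
  defines "y \<equiv> (selmer n ^^ Suc m) x"
  shows "inB n y" "\<forall>j. 0 < (selmer n ^^ j) y n" "(selmer n ^^ (p * N)) y = y"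
proof -
  have orbit_y: "(selmer n ^^ s) y = (selmer n ^^ (s + Suc m)) x" for s
    unfolding y_def by (simp only: funpow_add comp_apply)
  show "inB n y" unfolding y_def by (rule orbit_inB[OF n x])
  show "\<forall>j. 0 < (selmer n ^^ j) y n" unfolding orbit_y using x(2) by blast
  have "((selmer n ^^ p) ^^ N) y = y"
    by (induction N) (simp_all add: selmer_periodic_point[OF n per, folded y_def])
  then show "(selmer n ^^ (p * N)) y = y" unfolding funpow_mult .
qed

lemma periodic_column_ratio_tendsto:
  assumes n: "1 \<le> n" and x: "inB n x" "\<forall>j. 0 < (selmer n ^^ j) x n"
    and "1 \<le> p" and per: "\<forall>i\<in>{1..n}. (selmer n ^^ (m + p)) x i = (selmer n ^^ m) x i"
    and g: "g \<le> n" and i: "i \<in> {1..n}"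
  shows "(\<lambda>s. betas n x s $$ (i, g) / betas n x s $$ (0, g)) \<longlonglongrightarrow> x i"
proof -
  define y where "y = (selmer n ^^ Suc m) x"
  define L where "L = p * (n * n + 2 * n + 1)"
  define P where "P = (\<lambda>i j. betas n y L $$ (i, j))"
  define A where "A = (\<lambda>i j. betas n x (Suc m) $$ (i, j))"
  define w where "w = hom_coords y"
  have y: "inB n y" "\<forall>j. 0 < (selmer n ^^ j) y n"
    and period: "(selmer n ^^ L) y = y"
    unfolding y_def L_def by (rule selmer_periodic_tail[OF n x per])+
  have "n * n + 2 * n + 1 \<le> L" unfolding L_def using \<open>1 \<le> p\<close> by (metis mult_1 mult_le_mono1)
  then obtain c C lam
    where c: "0 < c" "c \<le> lam" "\<forall>i\<in>{..n}. \<forall>j\<in>{..n}. c \<le> P i j \<and> P i j \<le> C"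
    and eig_P: "\<forall>i\<in>{..n}. matvec {..n} P w i = lam * w i"
    unfolding P_def w_def by (rule periodic_block_eigen[OF n y period])
  obtain c2 where c2: "0 < c2" "\<forall>i\<le>n. hom_coords x i = c2 * matvec {..n} A w i"
    using hom_coords_betas[OF n x, of "Suc m"] unfolding y_def A_def w_def matvec_def by blast
  have I: "finite {..n}" "0 \<in> {..n}" "i \<in> {..n}" using i by auto
  have w: "\<forall>j\<in>{..n}. y n \<le> w j \<and> w j \<le> 1" "0 < y n"
    using hom_coords_bounds[OF n y(1)] y(2)[rule_format, of 0] unfolding w_def by auto
  have A: "\<forall>i\<in>{..n}. \<forall>j\<in>{..n}. 0 \<le> A i j"
      "\<forall>i\<in>{..n}. hom_coords x i = c2 * matvec {..n} A w i"
    using c2 unfolding A_def by (auto simp del: betas.simps intro: betas_nonneg)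
  have z: "hom_coords x 0 = 1" "0 \<le> hom_coords x i" "hom_coords x i \<le> 1"
    using hom_coords_bounds[OF n x(1), of i] i x(2)[rule_format, of 0] unfolding hom_coords_def by auto
  have bound: "\<bar>betas n x (Suc m + (Suc t * L + r)) $$ (i, g) / betas n x (Suc m + (Suc t * L + r)) $$ (0, g)
                  - x i\<bar> \<le> (1 - c / lam) ^ t * (C / (c * y n))" for t r
  proof -
    define v where "v = (\<lambda>l. betas n y r $$ (l, g))"
    have v0: "\<forall>j\<in>{..n}. 0 \<le> v j" using g unfolding v_def by (auto simp: betas_nonneg)
    obtain l where "l \<le> n" "0 < v l" using betas_column_nonzero[OF g] unfolding v_def by blast
    then have "0 < (\<Sum>j\<in>{..n}. v j)" using v0 by (intro sum_pos2[of _ l]) auto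
    note ratio = positive_matrix_ratio_bound[OF I w c(1,3) eig_P A c2(1) z v0 this, of t]
    have col: "betas n x (Suc m + (Suc t * L + r)) $$ (k, g) = matvec {..n} A ((matvec {..n} P ^^ Suc t) v) k"
      if "k \<le> n" for k
    proof -
      have "betas n x (Suc m + (Suc t * L + r)) $$ (k, g)
              = matvec {..n} A (\<lambda>l. betas n y (Suc t * L + r) $$ (l, g)) k"
        unfolding A_def y_def by (rule betas_add_entry[OF that g])
      also have "\<dots> = matvec {..n} A ((matvec {..n} P ^^ Suc t) v) k"
        unfolding P_def v_def by (intro matvec_cong betas_periodic_column[OF period g]) simp
      finally show ?thesis .
    qed
    show ?thesis using ratio col[of i] col[of 0] i by (simp add: hom_coords_def)
  qed
  show ?thesis
  proof (rule LIMSEQ_of_geometric_blocks[OF _ _ _ _ bound])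
    show "0 \<le> 1 - c / lam" "1 - c / lam < 1" using c(1,2) by auto
    show "0 < L" using \<open>1 \<le> p\<close> unfolding L_def by simp
    have "0 < C" using c(1,3) by (meson atMost_iff le0 less_le_trans order_trans)
    then show "0 < C / (c * y n)" using c(1) w(2) by simp
  qed
qed

theorem mainTheorem5:
  fixes n m p :: nat and x :: "nat \<Rightarrow> real"
  assumes "1 \<le> n"
    and "inB n x"
    and "\<forall>j. 0 < (selmer n ^^ j) x n"
    and "1 \<le> p"
    and "\<forall>i\<in>{1..n}. (selmer n ^^ (m + p)) x i = (selmer n ^^ m) x i"
  shows "(\<forall>i\<in>{1..n}.
           (\<lambda>s. betas n x s $$ (i, n - 1) / betas n x s $$ (0, n - 1)) \<longlonglongrightarrow> x i)
       \<and> (\<forall>g\<le>n. \<forall>i\<in>{1..n}.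
           (\<lambda>s. betas n x s $$ (i, g) / betas n x s $$ (0, g)) \<longlonglongrightarrow> x i)"
  using periodic_column_ratio_tendsto[OF assms] by auto

end
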